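(* Let $a\ge b\ge1$ be integers and define integers $c_j,d_j$ ($j\in\mathbb Z_+$) by $c_0=d_0=0$, $c_1=d_1=1$, $c_{k+2}+c_k=a d_{k+1}$, $d_{k+2}+d_k=b c_{k+1}$. Then for all $j\in\mathbb Z_+$ we have $c_{2j+1}=d_{2j+1}$ and $c_{2j}=\frac{a}{b}d_{2j}$.
   Context: $\mathbb Z_+=\{0,1,2,\dots\}$. *)

theory Defs
  imports Complex_Main
begin

end

theory Submission
  imports Defs
begin

text \<open>The relations \<open>c = d\<close> at odd indices and \<open>b c = a d\<close> at even indices are propagated
  together: eliminating \<open>c (n+2)\<close> and \<open>d (n+2)\<close> through the recurrences, the relation at
  index \<open>n+2\<close> follows from those at \<open>n\<close> and \<open>n+1\<close>.\<close>

lemma coupled_recurrence_parity_relations: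
  fixes a b :: "'a::comm_ring_1" and c d :: "nat \<Rightarrow> 'a"
  assumes "b * c 0 = a * d 0" and "c 1 = d 1"
    and c_rec: "\<And>k. c (k + 2) + c k = a * d (k + 1)"
    and d_rec: "\<And>k. d (k + 2) + d k = b * c (k + 1)"
  shows "c (2 * j + 1) = d (2 * j + 1) \<and> b * c (2 * j) = a * d (2 * j)"
proof (induction j)
  case 0
  then show ?case using assms(1,2) by simp
next
  case (Suc j)
  let ?n = "2 * j"
  have c_next: "c (k + 2) = a * d (k + 1) - c k" for k
    using c_rec[of k] by (simp add: eq_diff_eq)
  have d_next: "d (k + 2) = b * c (k + 1) - d k" for k
    using d_rec[of k] by (simp add: eq_diff_eq)
  have odd_eq: "c (?n + 1) = d (?n + 1)" and even_eq: "b * c ?n = a * d ?n"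
    using Suc.IH by auto
  have "b * c (?n + 2) = b * (a * d (?n + 1) - c ?n)"
    by (simp only: c_next)
  also have "\<dots> = a * (b * c (?n + 1) - d ?n)"
    using odd_eq even_eq by (simp add: algebra_simps)
  also have "\<dots> = a * d (?n + 2)"
    by (simp only: d_next)
  finally have even_step: "b * c (?n + 2) = a * d (?n + 2)" .
  have "c (?n + 1 + 2) = a * d (?n + 2) - c (?n + 1)"
    using c_next[of "?n + 1"] by simp
  also have "\<dots> = b * c (?n + 2) - d (?n + 1)"
    using even_step odd_eq by simp
  also have "\<dots> = d (?n + 1 + 2)"
    using d_next[of "?n + 1"] by simp
  finally have "c (?n + 1 + 2) = d (?n + 1 + 2)" .
  with even_step show ?case
    by (simp add: algebra_simps)
qed

theorem lemma2p5:
  fixes a b :: int and c d :: "nat \<Rightarrow> int"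
  assumes "a \<ge> b" and "b \<ge> 1"
    and "c 0 = 0" and "d 0 = 0" and "c 1 = 1" and "d 1 = 1"
    and "\<And>k. c (k + 2) + c k = a * d (k + 1)"
    and "\<And>k. d (k + 2) + d k = b * c (k + 1)"
  shows "\<forall>j. c (2 * j + 1) = d (2 * j + 1) \<and>
              real_of_int (c (2 * j)) = real_of_int a / real_of_int b * real_of_int (d (2 * j))"
proof
  fix j
  have odd_eq: "c (2 * j + 1) = d (2 * j + 1)" and even_eq: "b * c (2 * j) = a * d (2 * j)"
    using coupled_recurrence_parity_relations[of b c a d j] assms(3-8) by auto
  have "real_of_int b * real_of_int (c (2 * j)) = real_of_int a * real_of_int (d (2 * j))"
    using even_eq by (metis of_int_mult)
  moreover have "real_of_int b \<noteq> 0"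
    using assms(2) by simp
  ultimately show "c (2 * j + 1) = d (2 * j + 1) \<and>
              real_of_int (c (2 * j)) = real_of_int a / real_of_int b * real_of_int (d (2 * j))"
    using odd_eq by (simp add: field_simps)
qed

end
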